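(* A finite simple graph $G$ is a one-dimensional geometric graph if and only if $\Gamma^*(G)=0$.
   Context: A graph $G$ is a one-dimensional geometric graph if there is a map $\pi:V(G)\to\mathbb R$ such that for all distinct $u,v$, $u\sim v$ iff $|\pi(u)-\pi(v)|\le 1$. For a linear order $\prec$ on $V(G)$ and $v\in V(G)$ let $D(v)=\{x: x\prec v\}$, $U(v)=\{x: v\prec x\}$, and $N(v)$ the set of neighbours of $v$. Let $[x]_+=\max(x,0)$. For $A\subseteq V(G)$, $$\Gamma^*(G,\prec,A)=\frac{1}{|V(G)|^3}\sum_{u\prec v}\big[|N(v)\cap A\cap D(u)|-|N(u)\cap A\cap D(u)|\big]_+ +\frac{1}{|V(G)|^3}\sum_{u\prec v}\big[|N(u)\cap A\cap U(v)|-|N(v)\cap A\cap U(v)|\big]_+ ,$$ where the sums run over ordered pairs $(u,v)$ of vertices with $u\prec v$. Further $\Gamma^*(G,\prec)=\max_{A\subseteq V(G)}\Gamma^*(G,\prec,A)$ and $\Gamma^*(G)=\min_{\prec}\Gamma^*(G,\prec)$, the minimum over all linear orderings of $V(G)$. *)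

theory Defs
  imports Complex_Main
begin

text \<open>A linear order on V is a strict
linear order r \<subseteq> V \<times> V; (x,v) \<in> r means x \<prec> v.\<close>

definition simple_graph :: "'a set \<Rightarrow> ('a \<Rightarrow> 'a \<Rightarrow> bool) \<Rightarrow> bool" where
  "simple_graph V E \<longleftrightarrow> finite V \<and> (\<forall>u v. E u v \<longrightarrow> u \<in> V \<and> v \<in> V)
     \<and> (\<forall>u v. E u v \<longrightarrow> E v u) \<and> (\<forall>v. \<not> E v v)"

definition one_dim_geometric :: "'a set \<Rightarrow> ('a \<Rightarrow> 'a \<Rightarrow> bool) \<Rightarrow> bool" where
  "one_dim_geometric V E \<longleftrightarrow> (\<exists>\<pi> :: 'a \<Rightarrow> real.
     \<forall>u\<in>V. \<forall>v\<in>V. u \<noteq> v \<longrightarrow> (E u v \<longleftrightarrow> \<bar>\<pi> u - \<pi> v\<bar> \<le> 1))"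

definition nbhd :: "'a set \<Rightarrow> ('a \<Rightarrow> 'a \<Rightarrow> bool) \<Rightarrow> 'a \<Rightarrow> 'a set" where
  "nbhd V E v = {x \<in> V. E v x}"

definition down_set :: "'a set \<Rightarrow> 'a rel \<Rightarrow> 'a \<Rightarrow> 'a set" where
  "down_set V r v = {x \<in> V. (x, v) \<in> r}"

definition up_set :: "'a set \<Rightarrow> 'a rel \<Rightarrow> 'a \<Rightarrow> 'a set" where
  "up_set V r v = {x \<in> V. (v, x) \<in> r}"

definition pos_part :: "real \<Rightarrow> real" where
  "pos_part x = max x 0"

definition linear_orders_on :: "'a set \<Rightarrow> 'a rel set" where
  "linear_orders_on V = {r. strict_linear_order_on V r \<and> r \<subseteq> V \<times> V}"

definition Gamma_star_A :: "'a set \<Rightarrow> ('a \<Rightarrow> 'a \<Rightarrow> bool) \<Rightarrow> 'a rel \<Rightarrow> 'a set \<Rightarrow> real" where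
  "Gamma_star_A V E r A =
     (1 / real (card V) ^ 3) * (\<Sum>(u, v)\<in>r.
        pos_part (real (card (nbhd V E v \<inter> A \<inter> down_set V r u))
                - real (card (nbhd V E u \<inter> A \<inter> down_set V r u))))
   + (1 / real (card V) ^ 3) * (\<Sum>(u, v)\<in>r.
        pos_part (real (card (nbhd V E u \<inter> A \<inter> up_set V r v))
                - real (card (nbhd V E v \<inter> A \<inter> up_set V r v))))"

definition Gamma_star_ord :: "'a set \<Rightarrow> ('a \<Rightarrow> 'a \<Rightarrow> bool) \<Rightarrow> 'a rel \<Rightarrow> real" where
  "Gamma_star_ord V E r = Max (Gamma_star_A V E r ` Pow V)"

definition Gamma_star :: "'a set \<Rightarrow> ('a \<Rightarrow> 'a \<Rightarrow> bool) \<Rightarrow> real" where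
  "Gamma_star V E = Min (Gamma_star_ord V E ` linear_orders_on V)"

end

theory Submission
  imports Defs
begin

(*
  Proof idea. Both conditions of the theorem are equivalent to the existence of an
  "umbrella-free" linear order of V: whenever x < y < z and x ~ z, then also x ~ y and y ~ z.

  Gamma*(G,<,A) is a positive multiple of a sum of positive parts, so it
      vanishes iff every summand does; testing all A \<subseteq> V, the cardinality comparisons
      reduce to set inclusions between neighbourhoods, which say exactly that < is
      umbrella-free. Since Gamma*(G,<) \<ge> 0, Gamma*(G) = 0 iff some order has Gamma*(G,<) = 0.

  Ordering V by the positions \<pi>(v) (ties broken arbitrarily) gives
      an umbrella-free order. Conversely, from an umbrella-free order we build a
      "strict unit representation" -- increasing positions in which adjacent vertices are
      at distance < 1 and non-adjacent ones at distance > 1 -- by induction, inserting the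
      vertices in increasing order; the umbrella property guarantees that the constraints
      on the position of each new vertex can be met simultaneously.
*)

definition umbrella_free :: "('a \<Rightarrow> 'a \<Rightarrow> bool) \<Rightarrow> 'a rel \<Rightarrow> bool" where
  "umbrella_free E r \<longleftrightarrow>
     (\<forall>x y z. (x, y) \<in> r \<longrightarrow> (y, z) \<in> r \<longrightarrow> E x z \<longrightarrow> E x y \<and> E y z)"

(* Positions increasing along r such that r-related vertices are adjacent iff their distance
   is below 1, and the distance is never exactly 1 (strictness leaves room for insertions). *)
definition strict_unit_rep :: "('a \<Rightarrow> 'a \<Rightarrow> bool) \<Rightarrow> 'a rel \<Rightarrow> ('a \<Rightarrow> real) \<Rightarrow> bool" where
  "strict_unit_rep E r \<pi> \<longleftrightarrow> (\<forall>x y. (x, y) \<in> r \<longrightarrow>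
     \<pi> x < \<pi> y \<and> (E x y \<longrightarrow> \<pi> y - \<pi> x < 1) \<and> (\<not> E x y \<longrightarrow> 1 < \<pi> y - \<pi> x))"

section \<open>The Gamma side\<close>

lemma Max_nonneg_eq_0_iff:
  fixes f :: "'b \<Rightarrow> real"
  assumes "finite A" "A \<noteq> {}" "\<And>x. x \<in> A \<Longrightarrow> 0 \<le> f x"
  shows "Max (f ` A) = 0 \<longleftrightarrow> (\<forall>x\<in>A. f x = 0)"
proof
  assume max0: "Max (f ` A) = 0"
  show "\<forall>x\<in>A. f x = 0"
  proof
    fix x assume "x \<in> A"
    then have "f x \<le> Max (f ` A)" using assms(1) by simp
    then show "f x = 0" using max0 assms(3)[OF \<open>x \<in> A\<close>] by linarith
  qed
next
  assume "\<forall>x\<in>A. f x = 0"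
  moreover have "Max (f ` A) \<in> f ` A" using assms(1,2) by simp
  ultimately show "Max (f ` A) = 0" by auto
qed

lemma Min_nonneg_eq_0_iff:
  fixes f :: "'b \<Rightarrow> real"
  assumes "finite A" "A \<noteq> {}" "\<And>x. x \<in> A \<Longrightarrow> 0 \<le> f x"
  shows "Min (f ` A) = 0 \<longleftrightarrow> (\<exists>x\<in>A. f x = 0)"
proof
  assume "Min (f ` A) = 0"
  moreover have "Min (f ` A) \<in> f ` A" using assms(1,2) by simp
  ultimately show "\<exists>x\<in>A. f x = 0" by auto
next
  assume "\<exists>x\<in>A. f x = 0"
  then obtain x where "x \<in> A" "f x = 0" by blast
  then have "Min (f ` A) \<le> 0" using assms(1) by (metis Min_le finite_imageI imageI)
  moreover have "0 \<le> Min (f ` A)" using assms by simp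
  ultimately show "Min (f ` A) = 0" by simp
qed

lemma scaled_sums_eq_0_iff:
  fixes f g :: "'b \<Rightarrow> real"
  assumes "finite R" "0 < c" "\<And>p. 0 \<le> f p" "\<And>p. 0 \<le> g p"
  shows "c * sum f R + c * sum g R = 0 \<longleftrightarrow> (\<forall>p\<in>R. f p = 0 \<and> g p = 0)"
proof -
  have "0 \<le> sum f R" "0 \<le> sum g R" using assms(3,4) by (simp_all add: sum_nonneg)
  then have "c * sum f R + c * sum g R = 0 \<longleftrightarrow> sum f R = 0 \<and> sum g R = 0"
    using assms(2) by (simp add: add_nonneg_eq_0_iff)
  also have "\<dots> \<longleftrightarrow> (\<forall>p\<in>R. f p = 0 \<and> g p = 0)"
    using assms by (simp add: sum_nonneg_eq_0_iff ball_conj_distrib)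
  finally show ?thesis .
qed

lemma pos_part_nonneg: "0 \<le> pos_part x"
  by (simp add: pos_part_def)

lemma pos_part_eq_0_iff: "pos_part x = 0 \<longleftrightarrow> x \<le> 0"
  by (simp add: pos_part_def max_def)

lemma Gamma_star_A_nonneg: "0 \<le> Gamma_star_A V E r A"
  unfolding Gamma_star_A_def
  by (intro add_nonneg_nonneg mult_nonneg_nonneg sum_nonneg) (auto simp: pos_part_nonneg)

lemma Gamma_star_A_eq_0_iff:
  assumes "finite V" "r \<subseteq> V \<times> V"
  shows "Gamma_star_A V E r A = 0 \<longleftrightarrow> (\<forall>(u, v)\<in>r.
     card (nbhd V E v \<inter> A \<inter> down_set V r u) \<le> card (nbhd V E u \<inter> A \<inter> down_set V r u) \<and>
     card (nbhd V E u \<inter> A \<inter> up_set V r v) \<le> card (nbhd V E v \<inter> A \<inter> up_set V r v))"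
proof (cases "V = {}")
  case True
  then show ?thesis using assms(2) by (simp add: Gamma_star_A_def)
next
  case False
  have "finite r" using assms finite_subset by blast
  moreover have "0 < 1 / real (card V) ^ 3" using False assms(1) by (simp add: card_gt_0_iff)
  ultimately show ?thesis
    unfolding Gamma_star_A_def split_beta
    by (subst scaled_sums_eq_0_iff) (auto simp: pos_part_nonneg pos_part_eq_0_iff)
qed

(* Testing a cardinality comparison on all subsets A reduces it to an inclusion:
   the test set A = X \<inter> D - Y is the witness. *)
lemma card_test_sets_iff_subset:
  assumes "finite V" "X \<subseteq> V"
  shows "(\<forall>A\<in>Pow V. card (X \<inter> A \<inter> D) \<le> card (Y \<inter> A \<inter> D)) \<longleftrightarrow> X \<inter> D \<subseteq> Y"
proof
  assume tests: "\<forall>A\<in>Pow V. card (X \<inter> A \<inter> D) \<le> card (Y \<inter> A \<inter> D)"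
  define A where "A = X \<inter> D - Y"
  have "A \<in> Pow V" using assms by (auto simp: A_def)
  then have "card (X \<inter> A \<inter> D) \<le> card (Y \<inter> A \<inter> D)" using tests by blast
  moreover have "X \<inter> A \<inter> D = A" "Y \<inter> A \<inter> D = {}" by (auto simp: A_def)
  moreover have "finite A" using \<open>A \<in> Pow V\<close> assms(1) finite_subset by blast
  ultimately have "A = {}" by simp
  then show "X \<inter> D \<subseteq> Y" by (auto simp: A_def)
next
  assume "X \<inter> D \<subseteq> Y"
  then show "\<forall>A\<in>Pow V. card (X \<inter> A \<inter> D) \<le> card (Y \<inter> A \<inter> D)"
    using assms by (intro ballI card_mono) (auto intro: finite_subset)
qed

lemma umbrella_free_iff_nbhd_inclusions:
  assumes "r \<subseteq> V \<times> V" "\<And>x y. E x y \<Longrightarrow> E y x"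
  shows "umbrella_free E r \<longleftrightarrow> (\<forall>(u, v)\<in>r.
     nbhd V E v \<inter> down_set V r u \<subseteq> nbhd V E u \<and> nbhd V E u \<inter> up_set V r v \<subseteq> nbhd V E v)"
  using assms unfolding umbrella_free_def nbhd_def down_set_def up_set_def by blast

lemma Gamma_star_ord_nonneg:
  assumes "finite V"
  shows "0 \<le> Gamma_star_ord V E r"
proof -
  have "Gamma_star_A V E r {} \<le> Gamma_star_ord V E r"
    unfolding Gamma_star_ord_def using assms by (intro Max_ge) auto
  then show ?thesis using Gamma_star_A_nonneg[of V E r "{}"] by linarith
qed

lemma Gamma_star_ord_eq_0_iff:
  assumes "finite V" "r \<subseteq> V \<times> V" "\<And>x y. E x y \<Longrightarrow> E y x"
  shows "Gamma_star_ord V E r = 0 \<longleftrightarrow> umbrella_free E r"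
proof -
  have "Gamma_star_ord V E r = 0 \<longleftrightarrow> (\<forall>A\<in>Pow V. Gamma_star_A V E r A = 0)"
    unfolding Gamma_star_ord_def using assms(1)
    by (intro Max_nonneg_eq_0_iff) (auto simp: Gamma_star_A_nonneg)
  also have "\<dots> \<longleftrightarrow> (\<forall>(u, v)\<in>r.
     (\<forall>A\<in>Pow V. card (nbhd V E v \<inter> A \<inter> down_set V r u) \<le> card (nbhd V E u \<inter> A \<inter> down_set V r u)) \<and>
     (\<forall>A\<in>Pow V. card (nbhd V E u \<inter> A \<inter> up_set V r v) \<le> card (nbhd V E v \<inter> A \<inter> up_set V r v)))"
    using Gamma_star_A_eq_0_iff[OF assms(1,2)] by blast
  also have "\<dots> \<longleftrightarrow> (\<forall>(u, v)\<in>r.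
     nbhd V E v \<inter> down_set V r u \<subseteq> nbhd V E u \<and> nbhd V E u \<inter> up_set V r v \<subseteq> nbhd V E v)"
    using card_test_sets_iff_subset[OF assms(1)] by (simp add: nbhd_def)
  also have "\<dots> \<longleftrightarrow> umbrella_free E r"
    using umbrella_free_iff_nbhd_inclusions[OF assms(2,3)] by simp
  finally show ?thesis .
qed

lemma lex_key_order:
  fixes g :: "'a \<Rightarrow> real" and f :: "'a \<Rightarrow> nat"
  assumes "inj_on f V"
  shows "{(x, y). x \<in> V \<and> y \<in> V \<and> (g x < g y \<or> (g x = g y \<and> f x < f y))} \<in> linear_orders_on V"
  unfolding linear_orders_on_def strict_linear_order_on_def trans_def irrefl_def total_on_def
  using assms inj_on_eq_iff[OF assms] by auto (metis linorder_neqE_nat)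

lemma linear_orders_on_finite_nonempty:
  assumes "finite V"
  shows "finite (linear_orders_on V)" "linear_orders_on V \<noteq> {}"
proof -
  show "finite (linear_orders_on V)"
  proof (rule finite_subset)
    show "linear_orders_on V \<subseteq> Pow (V \<times> V)" by (auto simp: linear_orders_on_def)
  qed (use assms in simp)
  obtain f :: "'a \<Rightarrow> nat" and n where "inj_on f V"
    using finite_imp_inj_to_nat_seg[OF assms] by blast
  then show "linear_orders_on V \<noteq> {}" using lex_key_order[of f V "\<lambda>_. 0"] by blast
qed

lemma Gamma_star_eq_0_iff:
  assumes "finite V" "\<And>x y. E x y \<Longrightarrow> E y x"
  shows "Gamma_star V E = 0 \<longleftrightarrow> (\<exists>r\<in>linear_orders_on V. umbrella_free E r)"
proof -
  have "Gamma_star V E = 0 \<longleftrightarrow> (\<exists>r\<in>linear_orders_on V. Gamma_star_ord V E r = 0)"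
    unfolding Gamma_star_def using linear_orders_on_finite_nonempty[OF assms(1)]
    by (intro Min_nonneg_eq_0_iff) (auto simp: Gamma_star_ord_nonneg assms(1))
  also have "\<dots> \<longleftrightarrow> (\<exists>r\<in>linear_orders_on V. umbrella_free E r)"
    using Gamma_star_ord_eq_0_iff[OF assms(1) _ assms(2)] by (auto simp: linear_orders_on_def)
  finally show ?thesis .
qed

section \<open>The geometric side\<close>

(* Ordering the vertices by position (ties broken by an injective label) gives an
   umbrella-free order: between two vertices at distance \<le> 1 every vertex is close to both. *)
lemma geometric_imp_umbrella_free_order:
  fixes \<pi> :: "'a \<Rightarrow> real"
  assumes "finite V" "\<And>v. \<not> E v v"
    and geom: "\<forall>u\<in>V. \<forall>v\<in>V. u \<noteq> v \<longrightarrow> (E u v \<longleftrightarrow> \<bar>\<pi> u - \<pi> v\<bar> \<le> 1)"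
  shows "\<exists>r\<in>linear_orders_on V. umbrella_free E r"
proof -
  obtain f :: "'a \<Rightarrow> nat" and n where f: "inj_on f V"
    using finite_imp_inj_to_nat_seg[OF assms(1)] by blast
  define r where "r = {(x, y). x \<in> V \<and> y \<in> V \<and> (\<pi> x < \<pi> y \<or> (\<pi> x = \<pi> y \<and> f x < f y))}"
  have r_order: "r \<in> linear_orders_on V" unfolding r_def by (rule lex_key_order[OF f])
  have r_step: "x \<in> V" "y \<in> V" "x \<noteq> y" "\<pi> x \<le> \<pi> y" if "(x, y) \<in> r" for x y
    using that by (auto simp: r_def)
  have "umbrella_free E r"
    unfolding umbrella_free_def
  proof (intro allI impI)
    fix x y z assume xy: "(x, y) \<in> r" and yz: "(y, z) \<in> r" and "E x z"
    then have "x \<noteq> z" using assms(2) by auto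
    then have "\<bar>\<pi> x - \<pi> z\<bar> \<le> 1" using geom \<open>E x z\<close> r_step[OF xy] r_step[OF yz] by blast
    then have "\<bar>\<pi> x - \<pi> y\<bar> \<le> 1" "\<bar>\<pi> y - \<pi> z\<bar> \<le> 1"
      using r_step(4)[OF xy] r_step(4)[OF yz] by auto
    then show "E x y \<and> E y z" using geom r_step[OF xy] r_step[OF yz] by blast
  qed
  with r_order show ?thesis by blast
qed

lemma finite_strict_separation:
  fixes S T :: "real set"
  assumes "finite S" "finite T" "\<And>s t. s \<in> S \<Longrightarrow> t \<in> T \<Longrightarrow> s < t"
  obtains c where "\<And>s. s \<in> S \<Longrightarrow> s < c" "\<And>t. t \<in> T \<Longrightarrow> c < t"
proof -
  define a where "a = Max (insert (Min (insert 0 T) - 1) S)"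
  define b where "b = Min (insert (a + 1) T)"
  have a_ge: "s \<le> a" if "s \<in> S" for s using assms(1) that by (simp add: a_def)
  have a_lt: "a < t" if "t \<in> T" for t
  proof -
    have "Min (insert 0 T) \<le> t" using assms(2) that by simp
    moreover have "a \<in> insert (Min (insert 0 T) - 1) S"
      unfolding a_def by (rule Max_in) (simp_all add: assms(1))
    ultimately show ?thesis using assms(3) that by auto
  qed
  have "b \<in> insert (a + 1) T"
    unfolding b_def by (rule Min_in) (simp_all add: assms(2))
  then have "a < b" using a_lt by auto
  moreover have "b \<le> t" if "t \<in> T" for t using assms(2) that by (simp add: b_def)
  ultimately show ?thesis using a_ge by (intro that[of "(a + b) / 2"]) fastforce+
qed

(* The position c of m must exceed every \<pi> x, exceed \<pi> x + 1 for
   non-neighbours x and stay below \<pi> x + 1 for neighbours x; umbrella-freeness makes these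
   constraints compatible. *)
lemma strict_unit_rep_extend:
  assumes sym: "\<And>x y. E x y \<Longrightarrow> E y x" and umb: "umbrella_free E r"
    and "asym r" "total_on W r" "finite W"
    and rep: "strict_unit_rep E (r \<inter> W \<times> W) \<pi>"
    and below: "\<And>x. x \<in> W \<Longrightarrow> (x, m) \<in> r"
  obtains c where "strict_unit_rep E (r \<inter> insert m W \<times> insert m W) (\<pi>(m := c))"
proof -
  have \<pi>_step: "\<pi> x < \<pi> y" "E x y \<Longrightarrow> \<pi> y - \<pi> x < 1" "\<not> E x y \<Longrightarrow> 1 < \<pi> y - \<pi> x"
    if "(x, y) \<in> r" "x \<in> W" "y \<in> W" for x y
    using rep that unfolding strict_unit_rep_def by auto
  have compare: "x = y \<or> (x, y) \<in> r \<or> (y, x) \<in> r" if "x \<in> W" "y \<in> W" for x y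
    using \<open>total_on W r\<close> that unfolding total_on_def by blast
  have umbrella_m: "E x y" "E y m" if "(x, y) \<in> r" "y \<in> W" "E x m" for x y
    using umb that below unfolding umbrella_free_def by blast+
  define S where "S = \<pi> ` W \<union> (\<lambda>x. \<pi> x + 1) ` {x \<in> W. \<not> E x m}"
  define T where "T = (\<lambda>x. \<pi> x + 1) ` {x \<in> W. E x m}"
  have separated: "s < t" if "s \<in> S" "t \<in> T" for s t
  proof -
    obtain x where x: "x \<in> W" "E x m" "t = \<pi> x + 1" using \<open>t \<in> T\<close> by (auto simp: T_def)
    have "\<pi> y < \<pi> x + 1 \<and> (\<not> E y m \<longrightarrow> \<pi> y < \<pi> x)" if "y \<in> W" for y
    proof -
      consider "y = x" | "(y, x) \<in> r" | "(x, y) \<in> r" using compare[OF \<open>y \<in> W\<close> \<open>x \<in> W\<close>] by blast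
      then show ?thesis
      proof cases
        case 1
        then show ?thesis using x(2) by simp
      next
        case 2
        then show ?thesis using \<pi>_step(1)[OF 2 that \<open>x \<in> W\<close>] by simp
      next
        case 3
        have "\<pi> y - \<pi> x < 1" using \<pi>_step(2)[OF 3 \<open>x \<in> W\<close> that umbrella_m(1)[OF 3 that x(2)]] .
        then show ?thesis using umbrella_m(2)[OF 3 that x(2)] by simp
      qed
    qed
    then show ?thesis using \<open>s \<in> S\<close> x(3) by (auto simp: S_def)
  qed
  have "finite S" "finite T" using \<open>finite W\<close> by (simp_all add: S_def T_def)
  then obtain c where c_above: "\<And>s. s \<in> S \<Longrightarrow> s < c" and c_below: "\<And>t. t \<in> T \<Longrightarrow> c < t"
    using finite_strict_separation separated by blast
  have "m \<notin> W" using below \<open>asym r\<close> by (meson asymD)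
  have new_pair: "\<pi> x < c \<and> (E x m \<longrightarrow> c - \<pi> x < 1) \<and> (\<not> E x m \<longrightarrow> 1 < c - \<pi> x)"
    if "x \<in> W" for x
    using c_above[of "\<pi> x"] c_above[of "\<pi> x + 1"] c_below[of "\<pi> x + 1"] that
    by (auto simp: S_def T_def)
  have "strict_unit_rep E (r \<inter> insert m W \<times> insert m W) (\<pi>(m := c))"
    unfolding strict_unit_rep_def
  proof (intro allI impI)
    fix x y assume xy: "(x, y) \<in> r \<inter> insert m W \<times> insert m W"
    have "x \<noteq> m" using xy below \<open>asym r\<close> by (auto dest: asymD)
    then show "(\<pi>(m := c)) x < (\<pi>(m := c)) y \<and>
      (E x y \<longrightarrow> (\<pi>(m := c)) y - (\<pi>(m := c)) x < 1) \<and>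
      (\<not> E x y \<longrightarrow> 1 < (\<pi>(m := c)) y - (\<pi>(m := c)) x)"
      using xy new_pair \<pi>_step \<open>m \<notin> W\<close> by (cases "y = m") auto
  qed
  then show ?thesis by (rule that)
qed

(* An umbrella-free linear order of a finite set has a strict unit representation: insert the
   vertices in increasing order, ranked by the number of their predecessors. *)
lemma umbrella_free_imp_strict_unit_rep:
  assumes "finite V" "strict_linear_order_on V r" "r \<subseteq> V \<times> V"
    and "umbrella_free E r" "\<And>x y. E x y \<Longrightarrow> E y x"
  obtains \<pi> where "strict_unit_rep E r \<pi>"
proof -
  have "trans r" "irrefl r" "total_on V r"
    using assms(2) by (auto simp: strict_linear_order_on_def)
  then have "asym r" by (simp add: asym_on_iff_irrefl_on_if_trans_on irrefl_def)
  define rank where "rank x = card (down_set V r x)" for x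
  have rank_less: "rank x < rank y" if "(x, y) \<in> r" for x y
  proof -
    have "down_set V r x \<subset> down_set V r y"
      using that \<open>trans r\<close> \<open>irrefl r\<close> assms(3)
      unfolding down_set_def irrefl_def by (auto dest: transD)
    then show ?thesis using assms(1) by (simp add: rank_def psubset_card_mono down_set_def)
  qed
  have "\<exists>\<pi>. strict_unit_rep E (r \<inter> W \<times> W) \<pi>" if "W \<subseteq> V" for W
    using finite_subset[OF that assms(1)] that
  proof (induction W rule: finite_ranking_induct[where f = rank])
    case empty
    show ?case by (auto simp: strict_unit_rep_def)
  next
    case (insert m W)
    then obtain \<pi> where \<pi>: "strict_unit_rep E (r \<inter> W \<times> W) \<pi>" by auto
    show ?case
    proof (cases "m \<in> W")
      case True
      then show ?thesis using \<pi> by (auto simp: insert_absorb)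
    next
      case False
      have "(x, m) \<in> r" if "x \<in> W" for x
      proof -
        have "x \<noteq> m" "x \<in> V" "m \<in> V" using that False insert.prems by auto
        then have "(x, m) \<in> r \<or> (m, x) \<in> r" using \<open>total_on V r\<close> by (auto simp: total_on_def)
        moreover have "\<not> rank m < rank x" using insert.hyps(2) that by (simp add: not_less)
        ultimately show ?thesis using rank_less by blast
      qed
      moreover have "total_on W r" using \<open>total_on V r\<close> insert.prems total_on_subset by blast
      ultimately obtain c where "strict_unit_rep E (r \<inter> insert m W \<times> insert m W) (\<pi>(m := c))"
        using strict_unit_rep_extend[OF assms(5,4) \<open>asym r\<close> _ insert.hyps(1) \<pi>] by blast
      then show ?thesis by blast
    qed
  qed
  moreover have "r \<inter> V \<times> V = r" using assms(3) by blast
  ultimately show ?thesis using that by fastforce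
qed

lemma strict_unit_rep_imp_geometric:
  assumes "total_on V r" "\<And>x y. E x y \<Longrightarrow> E y x" "strict_unit_rep E r \<pi>"
  shows "one_dim_geometric V E"
  unfolding one_dim_geometric_def
proof (intro exI ballI impI)
  fix u v assume "u \<in> V" "v \<in> V" "u \<noteq> v"
  then have "(u, v) \<in> r \<or> (v, u) \<in> r" using assms(1) by (auto simp: total_on_def)
  then show "E u v \<longleftrightarrow> \<bar>\<pi> u - \<pi> v\<bar> \<le> 1"
    using assms(2,3) unfolding strict_unit_rep_def by fastforce
qed

lemma geometric_iff_umbrella_free_order:
  assumes "simple_graph V E"
  shows "one_dim_geometric V E \<longleftrightarrow> (\<exists>r\<in>linear_orders_on V. umbrella_free E r)"
proof
  assume "one_dim_geometric V E"
  then show "\<exists>r\<in>linear_orders_on V. umbrella_free E r"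
    using assms geometric_imp_umbrella_free_order
    unfolding one_dim_geometric_def simple_graph_def by metis
next
  assume "\<exists>r\<in>linear_orders_on V. umbrella_free E r"
  then obtain r where "strict_linear_order_on V r" "r \<subseteq> V \<times> V" "umbrella_free E r"
    by (auto simp: linear_orders_on_def)
  moreover have "finite V" "\<And>x y. E x y \<Longrightarrow> E y x" using assms by (auto simp: simple_graph_def)
  ultimately obtain \<pi> where "strict_unit_rep E r \<pi>" using umbrella_free_imp_strict_unit_rep by metis
  then show "one_dim_geometric V E"
    using strict_unit_rep_imp_geometric \<open>strict_linear_order_on V r\<close> assms
    by (metis simple_graph_def strict_linear_order_on_def)
qed

theorem mainTheorem2:
  fixes V :: "'a set" and E :: "'a \<Rightarrow> 'a \<Rightarrow> bool"
  assumes "simple_graph V E"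
  shows "one_dim_geometric V E \<longleftrightarrow> Gamma_star V E = 0"
proof -
  have "finite V" and sym: "\<And>x y. E x y \<Longrightarrow> E y x" using assms by (auto simp: simple_graph_def)
  have "one_dim_geometric V E \<longleftrightarrow> (\<exists>r\<in>linear_orders_on V. umbrella_free E r)"
    using geometric_iff_umbrella_free_order[OF assms] .
  also have "\<dots> \<longleftrightarrow> Gamma_star V E = 0"
    using Gamma_star_eq_0_iff[OF \<open>finite V\<close> sym] by simp
  finally show ?thesis .
qed

end
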